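(* Let $S$ be a set of bilabelled graphs such that for every $(K,\mathbf{a},\mathbf{b})\in S$ every vertex of $K$ occurs among the entries of $\mathbf{a}$ or $\mathbf{b}$. Let $\langle \mathbf{P}_{\mathrm{gt}},S\rangle$ denote the graph category generated by $S\cup\{\mathbf{P}_{\mathrm{gt}}\}$. Then $\langle \mathbf{P}_{\mathrm{gt}},S\rangle$ is a group-theoretical graph category. Consequently, $\langle \mathbf{P}_{\mathrm{gt}},S\rangle$ equals the group-theoretical graph category generated by $S$ (the smallest group-theoretical graph category containing $S$).
   Context: Graphs are finite, undirected, without multiple edges, loops allowed, considered up to isomorphism; $N_k$ is the edgeless graph on $k$ vertices. Bilabelled graph: $(K,\mathbf{a},\mathbf{b})$ with $K$ a graph, $\mathbf{a}\in V(K)^k$ (inputs), $\mathbf{b}\in V(K)^l$ (outputs), up to isomorphism of $K$ preserving the tuples. Operations: tensor product $(K,\mathbf{a},\mathbf{b})\otimes(H,\mathbf{c},\mathbf{d})=(K\sqcup H,\mathbf{a}\mathbf{c},\mathbf{b}\mathbf{d})$; composition (for $|\mathbf{b}|=|\mathbf{c}|$) $(H,\mathbf{c},\mathbf{d})\cdot(K,\mathbf{a},\mathbf{b})=(H\cdot K,\mathbf{a},\mathbf{d})$ where $H\cdot K$ is obtained from $K\sqcup H$ by identifying $b_i$ with $c_i$ for all $i$ (ignoring edge multiplicities); involution $(K,\mathbf{a},\mathbf{b})^*=(K,\mathbf{b},\mathbf{a})$. For a partition $\pi$ of $V(K)$, $K/\pi$ has the blocks as vertices with an edge between two (possibly equal)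 blocks iff $K$ has an edge between some of their elements, $q_\pi$ the quotient map, and $(K,\mathbf{a},\mathbf{b})/\pi:=(K/\pi,q_\pi(\mathbf{a}),q_\pi(\mathbf{b}))$. Let $\mathbf{0}=(N_0,\emptyset,\emptyset)$ and $\mathbf{M}^{k,l}=(M,(v,\dots,v),(v,\dots,v))$ for the one-vertex loopless graph $M$ with vertex $v$ ($k$ inputs, $l$ outputs). A graph category is a set of bilabelled graphs containing $\mathbf{M}^{1,1},\mathbf{M}^{0,2},\mathbf{0}$ and closed under tensor products, compositions and involution; it is group-theoretical if it is also closed under all quotients $\mathbf{K}\mapsto\mathbf{K}/\pi$. $\mathbf{P}_{\mathrm{gt}}$ denotes the bilabelled graph $(N_2,(x,y,y),(y,y,x))$, where $N_2$ has the two vertices $x,y$ and no edges. *)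

theory Defs
  imports Main
begin

text \<open>Vertices are natural numbers; an edge is a
nonempty set of at most two vertices (a singleton is a loop). Bilabelled
graphs are considered up to isomorphism: all notions below are formulated for
iso-closed sets of concrete representatives.\<close>

record blg =
  verts :: "nat set"
  edges :: "nat set set"
  inp :: "nat list"
  outp :: "nat list"

definition wf_blg :: "blg \<Rightarrow> bool" where
  "wf_blg K \<longleftrightarrow> finite (verts K)
     \<and> (\<forall>e\<in>edges K. e \<subseteq> verts K \<and> (card e = 1 \<or> card e = 2))
     \<and> set (inp K) \<subseteq> verts K \<and> set (outp K) \<subseteq> verts K"

definition blg_iso :: "blg \<Rightarrow> blg \<Rightarrow> bool" where
  "blg_iso K H \<longleftrightarrow> (\<exists>f. bij_betw f (verts K) (verts H)
     \<and> edges H = (\<lambda>e. f ` e) ` edges K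
     \<and> inp H = map f (inp K) \<and> outp H = map f (outp K))"

text \<open>Disjoint union: first graph on even, second on odd numbers.\<close>
definition sh0 :: "nat \<Rightarrow> nat" where "sh0 v = 2 * v"
definition sh1 :: "nat \<Rightarrow> nat" where "sh1 v = 2 * v + 1"

definition tensor :: "blg \<Rightarrow> blg \<Rightarrow> blg" where
  "tensor K H = \<lparr> verts = sh0 ` verts K \<union> sh1 ` verts H,
     edges = (\<lambda>e. sh0 ` e) ` edges K \<union> (\<lambda>e. sh1 ` e) ` edges H,
     inp = map sh0 (inp K) @ map sh1 (inp H),
     outp = map sh0 (outp K) @ map sh1 (outp H) \<rparr>"

definition involution :: "blg \<Rightarrow> blg" where
  "involution K = K\<lparr> inp := outp K, outp := inp K \<rparr>"

text \<open>Quotient by an equivalence relation r on the vertex set: each block is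
represented by its least element.\<close>
definition qmap :: "nat rel \<Rightarrow> nat \<Rightarrow> nat" where
  "qmap r v = Min (r `` {v})"

definition quotient_blg :: "blg \<Rightarrow> nat rel \<Rightarrow> blg" where
  "quotient_blg K r = \<lparr> verts = qmap r ` verts K,
     edges = (\<lambda>e. qmap r ` e) ` edges K,
     inp = map (qmap r) (inp K), outp = map (qmap r) (outp K) \<rparr>"

text \<open>Composition H \<cdot> K (outputs of K glued to inputs of H).\<close>
definition compose :: "blg \<Rightarrow> blg \<Rightarrow> blg" where
  "compose H K =
    (let U = \<lparr> verts = sh0 ` verts K \<union> sh1 ` verts H,
              edges = (\<lambda>e. sh0 ` e) ` edges K \<union> (\<lambda>e. sh1 ` e) ` edges H,
              inp = map sh0 (inp K), outp = map sh1 (outp H) \<rparr>;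
         P = set (zip (map sh0 (outp K)) (map sh1 (inp H)));
         r = (Id_on (verts U) \<union> P \<union> P\<inverse>)\<^sup>*
     in quotient_blg U r)"

definition blg0 :: blg where
  "blg0 = \<lparr> verts = {}, edges = {}, inp = [], outp = [] \<rparr>"

definition M11 :: blg where
  "M11 = \<lparr> verts = {0}, edges = {}, inp = [0], outp = [0] \<rparr>"

definition M02 :: blg where
  "M02 = \<lparr> verts = {0}, edges = {}, inp = [], outp = [0, 0] \<rparr>"

definition Pgt :: blg where
  "Pgt = \<lparr> verts = {0, 1}, edges = {}, inp = [0, 1, 1], outp = [1, 1, 0] \<rparr>"

definition graph_category :: "blg set \<Rightarrow> bool" where
  "graph_category C \<longleftrightarrow>
     (\<forall>K\<in>C. wf_blg K)
   \<and> (\<forall>K\<in>C. \<forall>H. wf_blg H \<longrightarrow> blg_iso K H \<longrightarrow> H \<in> C)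
   \<and> M11 \<in> C \<and> M02 \<in> C \<and> blg0 \<in> C
   \<and> (\<forall>K\<in>C. \<forall>H\<in>C. tensor K H \<in> C)
   \<and> (\<forall>K\<in>C. \<forall>H\<in>C. length (outp K) = length (inp H) \<longrightarrow> compose H K \<in> C)
   \<and> (\<forall>K\<in>C. involution K \<in> C)"

definition gt_graph_category :: "blg set \<Rightarrow> bool" where
  "gt_graph_category C \<longleftrightarrow> graph_category C
   \<and> (\<forall>K\<in>C. \<forall>r. equiv (verts K) r \<longrightarrow> quotient_blg K r \<in> C)"

definition generated_cat :: "blg set \<Rightarrow> blg set" where
  "generated_cat S = \<Inter> {C. graph_category C \<and> S \<subseteq> C}"

definition generated_gt_cat :: "blg set \<Rightarrow> blg set" where
  "generated_gt_cat S = \<Inter> {C. gt_graph_category C \<and> S \<subseteq> C}"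

end

(*
  Call a bilabelled graph K covered if appending some output pairs (d, d) to K gives a fully
  labelled graph of C = <Pgt, S>.  Every image of a fully labelled graph of C lies in C: after
  bending all inputs to outputs, any two output vertices can be merged, because Pgt lets a pair
  (v, v) travel along the outputs and the spider M^{2,2} identifies two neighbouring outputs.
  Capping the extra pairs then shows that every image, in particular every quotient, of a covered
  graph lies in C.  The covered graphs form a graph category containing Pgt and S (before a
  composition the outputs of K are duplicated into output pairs, so no glued vertex loses its
  label); hence all of C is covered and C is group-theoretical.  Conversely Pgt is a quotient of
  M^{0,2} (x) M^{1,1} (x) M^{2,0}, so it lies in every group-theoretical category containing S.
*)

theory Submission
  imports Defs
begin

section \<open>Images and isomorphisms of bilabelled graphs\<close>

definition map_blg :: "(nat \<Rightarrow> nat) \<Rightarrow> blg \<Rightarrow> blg" where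
  "map_blg f K = \<lparr> verts = f ` verts K, edges = (\<lambda>e. f ` e) ` edges K,
     inp = map f (inp K), outp = map f (outp K) \<rparr>"

lemma blg_eqI:
  fixes K H :: blg
  shows "verts K = verts H \<Longrightarrow> edges K = edges H \<Longrightarrow> inp K = inp H \<Longrightarrow> outp K = outp H \<Longrightarrow> K = H"
  by (cases K; cases H) simp

lemma blg_update_inp_id [simp]: "inp K = a \<Longrightarrow> K\<lparr>inp := a\<rparr> = K"
  by (cases K) auto

lemma blg_update_outp_id [simp]: "outp K = b \<Longrightarrow> K\<lparr>outp := b\<rparr> = K"
  by (cases K) auto

lemma map_blg_id [simp]: "map_blg id K = K"
  by (rule blg_eqI) (simp_all add: map_blg_def)

lemma map_blg_map_blg: "map_blg g (map_blg f K) = map_blg (g \<circ> f) K"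
  by (simp add: map_blg_def image_image)

lemma map_blg_update_outp: "map_blg f (K\<lparr>outp := os\<rparr>) = (map_blg f K)\<lparr>outp := map f os\<rparr>"
  by (simp add: map_blg_def)

lemma quotient_blg_eq_map_blg: "quotient_blg K r = map_blg (qmap r) K"
  by (simp add: quotient_blg_def map_blg_def)

lemma wf_map_blg:
  assumes "wf_blg K"
  shows "wf_blg (map_blg f K)"
proof -
  have "card (f ` e) = 1 \<or> card (f ` e) = 2" if "e \<in> edges K" for e
  proof -
    from assms that have e: "finite e" "card e = 1 \<or> card e = 2"
      unfolding wf_blg_def by (auto intro: finite_subset)
    then have "card (f ` e) \<le> card e" "card (f ` e) \<ge> 1"
      by (auto simp: card_image_le Suc_le_eq card_gt_0_iff)
    with e(2) show ?thesis by linarith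
  qed
  with assms show ?thesis
    unfolding wf_blg_def map_blg_def by auto
qed

lemma blg_iso_map_blg: "inj_on f (verts K) \<Longrightarrow> blg_iso K (map_blg f K)"
  unfolding blg_iso_def map_blg_def by (auto simp: bij_betw_def)

lemma blg_iso_imp_map_blg:
  assumes "blg_iso K H"
  obtains f where "inj_on f (verts K)" "H = map_blg f K"
proof -
  from assms obtain f where f: "bij_betw f (verts K) (verts H)" "edges H = (\<lambda>e. f ` e) ` edges K"
    "inp H = map f (inp K)" "outp H = map f (outp K)"
    unfolding blg_iso_def by blast
  then have "H = map_blg f K"
    by (intro blg_eqI) (auto simp: map_blg_def bij_betw_def)
  with f(1) show thesis
    using that bij_betw_imp_inj_on by blast
qed

lemma blg_iso_trans:
  assumes "blg_iso K H" "blg_iso H G"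
  shows "blg_iso K G"
proof -
  obtain f where f: "inj_on f (verts K)" and H: "H = map_blg f K"
    using assms(1) by (rule blg_iso_imp_map_blg)
  obtain g where g: "inj_on g (verts H)" and G: "G = map_blg g H"
    using assms(2) by (rule blg_iso_imp_map_blg)
  have "inj_on (g \<circ> f) (verts K)"
    using f g by (simp add: H map_blg_def comp_inj_on)
  then show ?thesis
    using blg_iso_map_blg by (simp add: G H map_blg_map_blg)
qed

lemma map_blg_cong:
  assumes "wf_blg K" "\<And>x. x \<in> verts K \<Longrightarrow> f x = g x"
  shows "map_blg f K = map_blg g K"
proof -
  have "\<forall>e\<in>edges K. e \<subseteq> verts K" "set (inp K) \<subseteq> verts K" "set (outp K) \<subseteq> verts K"
    using assms(1) unfolding wf_blg_def by blast+
  with assms(2) show ?thesis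
    unfolding map_blg_def by (auto intro!: image_cong map_cong)
qed

lemma blg_iso_sym:
  assumes "blg_iso K H" "wf_blg K"
  shows "blg_iso H K"
proof -
  obtain f where f: "inj_on f (verts K)" and H: "H = map_blg f K"
    using assms(1) by (rule blg_iso_imp_map_blg)
  define g where "g = inv_into (verts K) f"
  have "inj_on g (verts H)"
    using f by (simp add: H map_blg_def g_def inj_on_inv_into)
  moreover have "map_blg (g \<circ> f) K = map_blg id K"
    using f assms(2) by (intro map_blg_cong) (simp_all add: g_def)
  ultimately show ?thesis
    using blg_iso_map_blg[of g H] by (simp add: H map_blg_map_blg)
qed

lemma wf_blg_iso: "blg_iso K H \<Longrightarrow> wf_blg K \<Longrightarrow> wf_blg H"
  by (auto elim: blg_iso_imp_map_blg intro: wf_map_blg)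

lemma blg_iso_map_blg_same_kernel:
  assumes "wf_blg K" and kernel: "\<forall>x\<in>verts K. \<forall>y\<in>verts K. f x = f y \<longleftrightarrow> g x = g y"
  shows "blg_iso (map_blg f K) (map_blg g K)"
proof -
  define \<phi> where "\<phi> = g \<circ> inv_into (verts K) f"
  have \<phi>: "\<phi> (f x) = g x" if "x \<in> verts K" for x
  proof -
    have "inv_into (verts K) f (f x) \<in> verts K" "f (inv_into (verts K) f (f x)) = f x"
      using that by (auto intro: inv_into_into f_inv_into_f)
    then show ?thesis
      using kernel that unfolding \<phi>_def by auto
  qed
  have "inj_on \<phi> (verts (map_blg f K))"
    using \<phi> kernel by (auto simp: inj_on_def map_blg_def)
  moreover have "map_blg (\<phi> \<circ> f) K = map_blg g K"
    using \<phi> assms(1) by (intro map_blg_cong) simp_all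
  ultimately show ?thesis
    using blg_iso_map_blg by (metis map_blg_map_blg)
qed

section \<open>Composition as an image of the disjoint union\<close>

lemma sh_simps [simp]:
  "sh0 x = sh0 y \<longleftrightarrow> x = y" "sh1 x = sh1 y \<longleftrightarrow> x = y" "sh0 x \<noteq> sh1 y" "sh1 y \<noteq> sh0 x"
  "sh0 x div 2 = x" "sh1 x div 2 = x" "even (sh0 x)" "odd (sh1 x)"
  unfolding sh0_def sh1_def by presburger+

lemma card_image_sh [simp]: "card (sh0 ` e) = card e" "card (sh1 ` e) = card e"
  by (auto intro!: card_image inj_onI)

lemma sh_cases:
  obtains (sh0) x where "z = sh0 x" | (sh1) x where "z = sh1 x"
  unfolding sh0_def sh1_def by (metis oddE evenE)

lemma qmap_eq_iff:
  assumes "sym r" "trans r" "(x, x) \<in> r" "(y, y) \<in> r" "finite (r `` {x})" "finite (r `` {y})"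
  shows "qmap r x = qmap r y \<longleftrightarrow> (x, y) \<in> r"
proof
  assume "(x, y) \<in> r"
  then have "r `` {x} = r `` {y}"
    using assms(1,2) unfolding sym_def trans_def by blast
  then show "qmap r x = qmap r y"
    unfolding qmap_def by simp
next
  assume q: "qmap r x = qmap r y"
  have "qmap r x \<in> r `` {x}" "qmap r y \<in> r `` {y}"
    unfolding qmap_def using assms(3-6) by (intro Min_in; blast)+
  then have "(x, qmap r x) \<in> r" "(y, qmap r x) \<in> r"
    using q by auto
  then show "(x, y) \<in> r"
    using assms(1,2) by (meson symD transD)
qed

lemma qmap_rtrancl_eq_iff:
  fixes V :: "nat set"
  assumes "finite V" "P \<subseteq> V \<times> V"
  defines "r \<equiv> (Id_on V \<union> P \<union> P\<inverse>)\<^sup>*"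
  shows "qmap r x = qmap r y \<longleftrightarrow> (x, y) \<in> r"
proof -
  have "z = w \<or> w \<in> V" if "(z, w) \<in> r" for z w
    using that unfolding r_def by (induct rule: rtrancl_induct) (use assms(2) in auto)
  then have "finite (r `` {z})" for z
    using assms(1) by (auto intro: finite_subset[of _ "insert z V"])
  moreover have "sym r"
    unfolding r_def by (rule sym_rtrancl) (auto simp: sym_def)
  ultimately show ?thesis
    by (intro qmap_eq_iff) (auto simp: r_def trans_rtrancl)
qed

definition unglued :: "blg \<Rightarrow> blg \<Rightarrow> blg" where
  "unglued H K = \<lparr> verts = sh0 ` verts K \<union> sh1 ` verts H,
     edges = (\<lambda>e. sh0 ` e) ` edges K \<union> (\<lambda>e. sh1 ` e) ` edges H,
     inp = map sh0 (inp K), outp = map sh1 (outp H) \<rparr>"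

definition glue_pairs :: "blg \<Rightarrow> blg \<Rightarrow> nat rel" where
  "glue_pairs H K = set (zip (map sh0 (outp K)) (map sh1 (inp H)))"

definition glue_rel :: "blg \<Rightarrow> blg \<Rightarrow> nat rel" where
  "glue_rel H K = (Id_on (verts (unglued H K)) \<union> glue_pairs H K \<union> (glue_pairs H K)\<inverse>)\<^sup>*"

lemma compose_eq_map_blg_unglued: "compose H K = map_blg (qmap (glue_rel H K)) (unglued H K)"
  unfolding compose_def unglued_def glue_pairs_def glue_rel_def Let_def quotient_blg_eq_map_blg
  by simp

lemma wf_unglued: "wf_blg K \<Longrightarrow> wf_blg H \<Longrightarrow> wf_blg (unglued H K)"
  unfolding wf_blg_def unglued_def by (auto simp: image_mono subset_iff)

lemma glue_pairs_subset:
  assumes "wf_blg K" "wf_blg H"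
  shows "glue_pairs H K \<subseteq> verts (unglued H K) \<times> verts (unglued H K)"
  using assms unfolding glue_pairs_def unglued_def wf_blg_def
  by (auto simp: set_zip intro!: imageI nth_mem)

lemma glue_rel_refl [simp]: "(x, x) \<in> glue_rel H K"
  by (simp add: glue_rel_def)

lemma glue_rel_sym: "(x, y) \<in> glue_rel H K \<Longrightarrow> (y, x) \<in> glue_rel H K"
proof -
  have "sym (glue_rel H K)"
    unfolding glue_rel_def by (rule sym_rtrancl) (auto simp: sym_def)
  then show "(x, y) \<in> glue_rel H K \<Longrightarrow> (y, x) \<in> glue_rel H K"
    by (rule symD)
qed

lemma glue_rel_trans: "(x, y) \<in> glue_rel H K \<Longrightarrow> (y, z) \<in> glue_rel H K \<Longrightarrow> (x, z) \<in> glue_rel H K"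
  unfolding glue_rel_def by (rule rtrancl_trans)

lemma qmap_glue_rel_eq_iff:
  assumes "wf_blg K" "wf_blg H"
  shows "qmap (glue_rel H K) x = qmap (glue_rel H K) y \<longleftrightarrow> (x, y) \<in> glue_rel H K"
proof -
  have "finite (verts (unglued H K))"
    using wf_unglued[OF assms] unfolding wf_blg_def by blast
  then show ?thesis
    unfolding glue_rel_def by (intro qmap_rtrancl_eq_iff glue_pairs_subset assms)
qed

lemma glue_rel_glued:
  assumes "i < length (outp K)" "length (outp K) = length (inp H)"
  shows "(sh0 (outp K ! i), sh1 (inp H ! i)) \<in> glue_rel H K"
    and "(sh1 (inp H ! i), sh0 (outp K ! i)) \<in> glue_rel H K"
proof -
  have "(sh0 (outp K ! i), sh1 (inp H ! i)) \<in> glue_pairs H K"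
    unfolding glue_pairs_def set_zip using assms by (auto intro!: exI[of _ i])
  then show "(sh0 (outp K ! i), sh1 (inp H ! i)) \<in> glue_rel H K"
    "(sh1 (inp H ! i), sh0 (outp K ! i)) \<in> glue_rel H K"
    unfolding glue_rel_def by auto
qed

definition copair :: "(nat \<Rightarrow> nat) \<Rightarrow> (nat \<Rightarrow> nat) \<Rightarrow> nat \<Rightarrow> nat" where
  "copair f h z = (if even z then f (z div 2) else h (z div 2))"

lemma copair_sh [simp]: "copair f h (sh0 x) = f x" "copair f h (sh1 x) = h x"
  by (simp_all add: copair_def)

definition glued_image :: "(nat \<Rightarrow> nat) \<Rightarrow> (nat \<Rightarrow> nat) \<Rightarrow> blg \<Rightarrow> blg \<Rightarrow> blg" where
  "glued_image f h K H = \<lparr> verts = f ` verts K \<union> h ` verts H,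
     edges = (\<lambda>e. f ` e) ` edges K \<union> (\<lambda>e. h ` e) ` edges H,
     inp = map f (inp K), outp = map h (outp H) \<rparr>"

lemma map_blg_copair_unglued: "map_blg (copair f h) (unglued H K) = glued_image f h K H"
  by (simp add: map_blg_def glued_image_def unglued_def image_Un image_image)

lemma copair_respects_glue_rel:
  assumes "map f (outp K) = map h (inp H)" "(z, z') \<in> glue_rel H K"
  shows "copair f h z = copair f h z'"
  using assms(2) unfolding glue_rel_def
proof (induct rule: rtrancl_induct)
  case (step y w)
  have "f (outp K ! i) = h (inp H ! i)" if "i < length (outp K)" for i
    using assms(1) that by (metis length_map nth_map)
  then have "copair f h y = copair f h w"
    using step(2) assms(1) by (auto simp: glue_pairs_def set_zip dest: map_eq_imp_length_eq)
  with step(3) show ?case by simp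
qed simp

lemma compose_iso_glued_image:
  assumes "wf_blg K" "wf_blg H" and compatible: "map f (outp K) = map h (inp H)"
    and kernel: "\<forall>z\<in>verts (unglued H K). \<forall>z'\<in>verts (unglued H K).
      copair f h z = copair f h z' \<longrightarrow> (z, z') \<in> glue_rel H K"
  shows "blg_iso (compose H K) (glued_image f h K H)"
proof -
  have "blg_iso (map_blg (qmap (glue_rel H K)) (unglued H K)) (map_blg (copair f h) (unglued H K))"
  proof (intro blg_iso_map_blg_same_kernel wf_unglued assms(1,2) ballI)
    fix z z' assume "z \<in> verts (unglued H K)" "z' \<in> verts (unglued H K)"
    then show "qmap (glue_rel H K) z = qmap (glue_rel H K) z' \<longleftrightarrow> copair f h z = copair f h z'"
      using kernel copair_respects_glue_rel[OF compatible]
      unfolding qmap_glue_rel_eq_iff[OF assms(1,2)] by blast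
  qed
  then show ?thesis
    unfolding compose_eq_map_blg_unglued map_blg_copair_unglued .
qed

lemma compose_iso_glued_image_by_representatives:
  assumes "wf_blg K" "wf_blg H" "map f (outp K) = map h (inp H)"
    and representative: "\<forall>z\<in>verts (unglued H K). (z, \<sigma> (copair f h z)) \<in> glue_rel H K"
  shows "blg_iso (compose H K) (glued_image f h K H)"
  using assms(1-3)
proof (rule compose_iso_glued_image, intro ballI impI)
  fix z z' assume "z \<in> verts (unglued H K)" "z' \<in> verts (unglued H K)" "copair f h z = copair f h z'"
  then show "(z, z') \<in> glue_rel H K"
    using representative glue_rel_trans glue_rel_sym by metis
qed

lemma compose_edgeless_iso_map_blg:
  assumes wf: "wf_blg K" "wf_blg H" and "edges H = {}" and covered: "verts H \<subseteq> set (inp H)"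
    and compatible: "map f (outp K) = map h (inp H)"
    and glued: "\<forall>x\<in>verts K. (sh0 x, sh0 (f x)) \<in> glue_rel H K"
  shows "blg_iso (compose H K) ((map_blg f K)\<lparr>outp := map h (outp H)\<rparr>)"
proof -
  have len: "length (outp K) = length (inp H)"
    using compatible by (metis length_map)
  have "\<forall>z\<in>verts (unglued H K). (z, sh0 (copair f h z)) \<in> glue_rel H K"
  proof
    fix z assume z: "z \<in> verts (unglued H K)"
    show "(z, sh0 (copair f h z)) \<in> glue_rel H K"
    proof (cases z rule: sh_cases)
      case (sh0 x)
      then show ?thesis using z glued unfolding unglued_def by auto
    next
      case (sh1 y)
      then obtain i where i: "i < length (inp H)" "y = inp H ! i"
        using z covered unfolding unglued_def by (auto simp: in_set_conv_nth subset_iff)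
      have "outp K ! i \<in> verts K"
        using wf(1) i len nth_mem unfolding wf_blg_def by (metis subsetD)
      then have "(sh0 (outp K ! i), sh0 (f (outp K ! i))) \<in> glue_rel H K"
        using glued by blast
      moreover have "(sh1 y, sh0 (outp K ! i)) \<in> glue_rel H K"
        using glue_rel_glued(2)[of i K H] i len by simp
      moreover have "f (outp K ! i) = h y"
        using compatible i len by (metis nth_map)
      ultimately show ?thesis
        using sh1 glue_rel_trans by auto
    qed
  qed
  then have "blg_iso (compose H K) (glued_image f h K H)"
    by (rule compose_iso_glued_image_by_representatives[OF wf compatible])
  moreover have "glued_image f h K H = (map_blg f K)\<lparr>outp := map h (outp H)\<rparr>"
  proof (rule blg_eqI)
    have "h ` verts H \<subseteq> set (map f (outp K))"
      using covered by (auto simp: compatible)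
    also have "\<dots> \<subseteq> f ` verts K"
      using wf(1) unfolding wf_blg_def by auto
    finally show "verts (glued_image f h K H) = verts ((map_blg f K)\<lparr>outp := map h (outp H)\<rparr>)"
      unfolding glued_image_def map_blg_def by auto
  qed (simp_all add: glued_image_def map_blg_def assms(3))
  ultimately show ?thesis by simp
qed

section \<open>Graph categories\<close>

lemma map_nth_upt_length: "map (\<lambda>i. f (xs ! i)) [0..<length xs] = map f xs"
  by (rule map_upt_eqI) auto

definition edgeless_blg :: "nat list \<Rightarrow> nat list \<Rightarrow> blg" where
  "edgeless_blg cs ds = \<lparr> verts = set cs \<union> set ds, edges = {}, inp = cs, outp = ds \<rparr>"

definition identity_blg :: "nat \<Rightarrow> blg" where
  "identity_blg n = edgeless_blg [0..<n] [0..<n]"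

lemma map_blg_edgeless_blg: "map_blg f (edgeless_blg cs ds) = edgeless_blg (map f cs) (map f ds)"
  unfolding map_blg_def edgeless_blg_def by (simp add: image_Un)

lemma involution_edgeless_blg: "involution (edgeless_blg cs ds) = edgeless_blg ds cs"
  unfolding edgeless_blg_def involution_def by auto

lemma wf_tensor: "wf_blg K \<Longrightarrow> wf_blg H \<Longrightarrow> wf_blg (tensor K H)"
  unfolding wf_blg_def tensor_def by (auto simp: image_mono subset_iff)

lemma wf_involution: "wf_blg K \<Longrightarrow> wf_blg (involution K)"
  unfolding wf_blg_def involution_def by auto

lemma wf_compose: "wf_blg K \<Longrightarrow> wf_blg H \<Longrightarrow> wf_blg (compose H K)"
  unfolding compose_eq_map_blg_unglued by (intro wf_map_blg wf_unglued)

lemma wf_edgeless_blg: "wf_blg (edgeless_blg cs ds)"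
  unfolding wf_blg_def edgeless_blg_def by auto

lemma wf_generators: "wf_blg M11" "wf_blg M02" "wf_blg blg0"
  unfolding M11_def M02_def blg0_def wf_blg_def by auto

locale graph_cat =
  fixes C :: "blg set"
  assumes graph_category: "graph_category C"
begin

lemma wf_mem: "K \<in> C \<Longrightarrow> wf_blg K"
  using graph_category unfolding graph_category_def by blast

lemma iso_mem: "K \<in> C \<Longrightarrow> blg_iso K H \<Longrightarrow> H \<in> C"
  using graph_category wf_blg_iso wf_mem unfolding graph_category_def by blast

lemma tensor_mem: "K \<in> C \<Longrightarrow> H \<in> C \<Longrightarrow> tensor K H \<in> C"
  using graph_category unfolding graph_category_def by blast

lemma compose_mem: "K \<in> C \<Longrightarrow> H \<in> C \<Longrightarrow> length (outp K) = length (inp H) \<Longrightarrow> compose H K \<in> C"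
  using graph_category unfolding graph_category_def by blast

lemma involution_mem: "K \<in> C \<Longrightarrow> involution K \<in> C"
  using graph_category unfolding graph_category_def by blast

lemma M11_mem: "M11 \<in> C" and M02_mem: "M02 \<in> C" and blg0_mem: "blg0 \<in> C"
  using graph_category unfolding graph_category_def by blast+

lemma map_blg_mem: "K \<in> C \<Longrightarrow> inj_on f (verts K) \<Longrightarrow> map_blg f K \<in> C"
  by (blast intro: iso_mem blg_iso_map_blg)

lemma identity_blg_mem: "identity_blg n \<in> C"
proof (induct n)
  case 0
  have "identity_blg 0 = blg0"
    unfolding identity_blg_def edgeless_blg_def blg0_def by simp
  then show ?case using blg0_mem by simp
next
  case (Suc n)
  define xs where "xs = map sh0 [0..<n] @ [1]"
  define \<phi> where "\<phi> z = (if odd z then n else z div 2)" for z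
  have "tensor (identity_blg n) M11 = edgeless_blg xs xs"
    unfolding xs_def tensor_def identity_blg_def edgeless_blg_def M11_def by (simp add: sh1_def)
  moreover have "tensor (identity_blg n) M11 \<in> C"
    using Suc tensor_mem M11_mem by blast
  moreover have "inj_on \<phi> (verts (edgeless_blg xs xs))"
    by (auto simp: xs_def edgeless_blg_def \<phi>_def inj_on_def sh0_def)
  moreover have "map_blg \<phi> (edgeless_blg xs xs) = identity_blg (Suc n)"
    by (simp add: map_blg_edgeless_blg identity_blg_def xs_def \<phi>_def map_idI)
  ultimately show ?case
    using map_blg_mem by metis
qed

text \<open>Composing \<open>L\<close> with \<open>identity_blg \<otimes> edgeless_blg cs ds \<otimes> identity_blg\<close> rewrites the
  output segment \<open>bs\<close> to \<open>ds\<close>; outputs in \<open>bs\<close> glued to the same input of the edgeless graph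
  get identified, which \<open>f\<close> may record.\<close>

lemma replace_output_segment_map_blg:
  assumes L: "L \<in> C" and edgeless: "edgeless_blg cs ds \<in> C" "set ds \<subseteq> set cs"
    and outp_L: "outp L = xs @ bs @ ys" "length bs = length cs"
    and compatible: "map g cs = map f bs"
    and moved: "\<And>x. x \<in> verts L \<Longrightarrow> f x \<noteq> x \<Longrightarrow>
      \<exists>i<length cs. \<exists>j<length cs. cs ! i = cs ! j \<and> bs ! i = x \<and> bs ! j = f x"
  shows "(map_blg f L)\<lparr>outp := map f xs @ map g ds @ map f ys\<rparr> \<in> C"
proof -
  define p q where "p = length xs" and "q = length ys"
  define R where "R = tensor (tensor (identity_blg p) (edgeless_blg cs ds)) (identity_blg q)"
  have R: "R \<in> C"
    unfolding R_def using identity_blg_mem edgeless tensor_mem by blast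
  have inp_R: "inp R = map sh0 (map sh0 [0..<p] @ map sh1 cs) @ map sh1 [0..<q]"
    and outp_R: "outp R = map sh0 (map sh0 [0..<p] @ map sh1 ds) @ map sh1 [0..<q]"
    and verts_R: "verts R = sh0 ` (sh0 ` {0..<p} \<union> sh1 ` (set cs \<union> set ds)) \<union> sh1 ` {0..<q}"
    and edges_R: "edges R = {}"
    unfolding R_def tensor_def identity_blg_def edgeless_blg_def by simp_all
  define h where "h z = (if odd z then f (ys ! (z div 2))
    else if odd (z div 2) then g (z div 2 div 2) else f (xs ! (z div 2 div 2)))" for z
  have map_h_inp: "map h (inp R) = map f xs @ map g cs @ map f ys"
    and map_h_outp: "map h (outp R) = map f xs @ map g ds @ map f ys"
    unfolding inp_R outp_R by (simp_all add: h_def p_def q_def comp_def map_nth_upt_length)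
  have wf: "wf_blg L" "wf_blg R"
    using L R wf_mem by auto
  have len: "length (outp L) = length (inp R)"
    unfolding outp_L inp_R using outp_L(2) p_def q_def by simp
  have glued: "(sh0 x, sh0 (f x)) \<in> glue_rel R L" if x: "x \<in> verts L" for x
  proof (cases "f x = x")
    case False
    then obtain i j where ij: "i < length cs" "j < length cs" "cs ! i = cs ! j" "bs ! i = x" "bs ! j = f x"
      using moved x by blast
    have segment: "outp L ! (p + k) = bs ! k" "inp R ! (p + k) = sh0 (sh1 (cs ! k))"
      "p + k < length (outp L)" if "k < length cs" for k
      using that outp_L(2) unfolding outp_L(1) inp_R p_def by (simp_all add: nth_append)
    have "(sh0 x, sh1 (inp R ! (p + i))) \<in> glue_rel R L"
      using glue_rel_glued(1)[OF segment(3)[OF ij(1)] len] segment ij by simp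
    moreover have "(sh1 (inp R ! (p + i)), sh0 (f x)) \<in> glue_rel R L"
      using glue_rel_glued(2)[OF segment(3)[OF ij(2)] len] segment ij by simp
    ultimately show ?thesis
      by (rule glue_rel_trans)
  qed simp
  have "blg_iso (compose R L) ((map_blg f L)\<lparr>outp := map h (outp R)\<rparr>)"
  proof (rule compose_edgeless_iso_map_blg[OF wf edges_R])
    show "verts R \<subseteq> set (inp R)"
      unfolding verts_R inp_R using edgeless(2) by auto
    show "map f (outp L) = map h (inp R)"
      unfolding map_h_inp outp_L using compatible by simp
  qed (use glued in blast)
  moreover have "compose R L \<in> C"
    using compose_mem[OF L R len] .
  ultimately show ?thesis
    using iso_mem map_h_outp by simp
qed

lemma replace_output_segment:
  assumes "L \<in> C" "edgeless_blg cs ds \<in> C" "set ds \<subseteq> set cs" "outp L = xs @ map g cs @ ys"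
  shows "L\<lparr>outp := xs @ map g ds @ ys\<rparr> \<in> C"
  using replace_output_segment_map_blg[OF assms(1-4), where f = id and g = g] by simp

end

lemma blg_iso_compose_cup:
  assumes wf_M: "wf_blg M" and inp_M: "inp M = a @ [x]"
  shows "blg_iso (compose (tensor M M11) (tensor (identity_blg (length a)) M02))
    (M\<lparr>inp := a, outp := outp M @ [x]\<rparr>)"
proof -
  define n where "n = length a"
  define K where "K = tensor (identity_blg n) M02"
  define H where "H = tensor M M11"
  have wf: "wf_blg K" "wf_blg H"
    unfolding K_def H_def identity_blg_def using wf_M by (simp_all add: wf_tensor wf_edgeless_blg wf_generators)
  have verts_K: "verts K = sh0 ` {0..<n} \<union> {sh1 0}" and edges_K: "edges K = {}"
    and inp_K: "inp K = map sh0 [0..<n]" and outp_K: "outp K = map sh0 [0..<n] @ [sh1 0, sh1 0]"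
    unfolding K_def tensor_def identity_blg_def edgeless_blg_def M02_def by auto
  have verts_H: "verts H = sh0 ` verts M \<union> {sh1 0}" and edges_H: "edges H = (\<lambda>e. sh0 ` e) ` edges M"
    and inp_H: "inp H = map sh0 (a @ [x]) @ [sh1 0]" and outp_H: "outp H = map sh0 (outp M) @ [sh1 0]"
    unfolding H_def tensor_def M11_def inp_M by auto
  define f where "f z = (if even z then a ! (z div 2) else x)" for z
  define h where "h z = (if even z then z div 2 else x)" for z
  have len: "length (outp K) = length (inp H)"
    unfolding outp_K inp_H n_def by simp
  have compatible: "map f (outp K) = map h (inp H)"
    unfolding outp_K inp_H by (simp add: f_def h_def n_def comp_def map_nth_upt_length map_nth)
  have glued: "(sh0 (outp K ! i), sh1 (inp H ! i)) \<in> glue_rel H K"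
    "(sh1 (inp H ! i), sh0 (outp K ! i)) \<in> glue_rel H K" if "i < n + 2" for i
    using glue_rel_glued[of i K H] that len unfolding outp_K by auto
  have nth_less: "outp K ! i = sh0 i" "inp H ! i = sh0 (a ! i)" if "i < n" for i
    using that unfolding outp_K inp_H n_def by (auto simp: nth_append)
  have nth_last: "outp K ! n = sh1 0" "inp H ! n = sh0 x" "outp K ! (n + 1) = sh1 0" "inp H ! (n + 1) = sh1 0"
    unfolding outp_K inp_H n_def by (auto simp: nth_append)
  have "\<forall>z\<in>verts (unglued H K). (z, sh1 (sh0 (copair f h z))) \<in> glue_rel H K"
  proof
    fix z assume "z \<in> verts (unglued H K)"
    then consider (identity) i where "i < n" "z = sh0 (sh0 i)" | (cup) "z = sh0 (sh1 0)"
      | (M) y where "z = sh1 (sh0 y)" | (M11) "z = sh1 (sh1 0)"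
      unfolding unglued_def verts_K verts_H by auto
    then show "(z, sh1 (sh0 (copair f h z))) \<in> glue_rel H K"
    proof cases
      case (identity i)
      then show ?thesis using glued(1)[of i] nth_less[of i] by (simp add: f_def)
    next
      case cup
      then show ?thesis using glued(1)[of n] nth_last by (simp add: f_def)
    next
      case M11
      have "(z, sh0 (sh1 0)) \<in> glue_rel H K" "(sh0 (sh1 0), sh1 (sh0 x)) \<in> glue_rel H K"
        using glued(2)[of "n + 1"] glued(1)[of n] nth_last M11 by simp_all
      then show ?thesis
        using M11 glue_rel_trans by (simp add: h_def)
    qed (simp add: h_def)
  qed
  then have "blg_iso (compose H K) (glued_image f h K H)"
    by (rule compose_iso_glued_image_by_representatives[OF wf(1,2) compatible])
  moreover have "glued_image f h K H = M\<lparr>inp := a, outp := outp M @ [x]\<rparr>"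
  proof (rule blg_eqI)
    have "set a \<subseteq> verts M" "x \<in> verts M"
      using wf_M inp_M unfolding wf_blg_def by auto
    moreover have "f ` verts K = set a \<union> {x}"
      unfolding verts_K image_Un image_image by (auto simp: f_def n_def in_set_conv_nth)
    moreover have "h ` verts H = verts M \<union> {x}"
      unfolding verts_H image_Un image_image by (simp add: h_def)
    ultimately show "verts (glued_image f h K H) = verts (M\<lparr>inp := a, outp := outp M @ [x]\<rparr>)"
      unfolding glued_image_def by auto
    show "edges (glued_image f h K H) = edges (M\<lparr>inp := a, outp := outp M @ [x]\<rparr>)"
    proof -
      have "h (sh0 y) = y" for y
        by (simp add: h_def)
      then show ?thesis
        unfolding glued_image_def edges_K edges_H by (simp add: image_image)
    qed
  qed (simp_all add: glued_image_def inp_K outp_H f_def h_def n_def comp_def map_nth_upt_length map_nth)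
  ultimately show ?thesis
    unfolding H_def K_def n_def by simp
qed

context graph_cat
begin

lemma bend_input:
  assumes M: "M \<in> C" and "inp M = a @ [x]"
  shows "M\<lparr>inp := a, outp := outp M @ [x]\<rparr> \<in> C"
proof (rule iso_mem[OF compose_mem blg_iso_compose_cup[OF wf_mem[OF M] assms(2)]])
  show "tensor (identity_blg (length a)) M02 \<in> C" "tensor M M11 \<in> C"
    using M identity_blg_mem M02_mem M11_mem by (blast intro: tensor_mem)+
  show "length (outp (tensor (identity_blg (length a)) M02)) = length (inp (tensor M M11))"
    using assms(2) by (simp add: tensor_def identity_blg_def edgeless_blg_def M02_def M11_def)
qed

lemma unbend_output:
  assumes "M \<in> C" "outp M = b @ [x]"
  shows "M\<lparr>inp := inp M @ [x], outp := b\<rparr> \<in> C"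
proof -
  have "(involution M)\<lparr>inp := b, outp := outp (involution M) @ [x]\<rparr> \<in> C"
    using assms by (intro bend_input involution_mem) (simp_all add: involution_def)
  then have "involution ((involution M)\<lparr>inp := b, outp := outp (involution M) @ [x]\<rparr>) \<in> C"
    by (rule involution_mem)
  then show ?thesis
    by (simp add: involution_def)
qed

lemma bend_inputs: "M \<in> C \<Longrightarrow> inp M = a @ e \<Longrightarrow> M\<lparr>inp := a, outp := outp M @ rev e\<rparr> \<in> C"
proof (induct e arbitrary: M rule: rev_induct)
  case (snoc x e)
  have "M\<lparr>inp := a @ e, outp := outp M @ [x]\<rparr> \<in> C"
    using bend_input snoc(2,3) by simp
  from snoc(1)[OF this] show ?case by simp
qed simp

lemma unbend_outputs: "M \<in> C \<Longrightarrow> outp M = b @ rev e \<Longrightarrow> M\<lparr>inp := inp M @ e, outp := b\<rparr> \<in> C"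
proof (induct e arbitrary: M)
  case (Cons x e)
  have "M\<lparr>inp := inp M @ [x], outp := b @ rev e\<rparr> \<in> C"
    using unbend_output Cons(2,3) by simp
  from Cons(1)[OF this] show ?case by simp
qed simp

end

section \<open>Rewriting outputs with \<open>Pgt\<close>\<close>

definition spider :: "nat \<Rightarrow> nat \<Rightarrow> blg" where
  "spider k l = edgeless_blg (replicate k 0) (replicate l 0)"

lemma Pgt_eq_edgeless_blg: "Pgt = edgeless_blg [0, 1, 1] [1, 1, 0]"
  unfolding Pgt_def edgeless_blg_def by auto

locale Pgt_graph_cat = graph_cat +
  assumes Pgt_mem: "Pgt \<in> C"
begin

lemma spider_3_3_mem: "spider 3 3 \<in> C"
proof -
  have wf: "wf_blg Pgt"
    using Pgt_mem wf_mem by blast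
  have len: "length (outp Pgt) = length (inp Pgt)"
    by (simp add: Pgt_def)
  have "(sh0 1, sh1 1) \<in> glue_rel Pgt Pgt" "(sh1 1, sh0 0) \<in> glue_rel Pgt Pgt"
    using glue_rel_glued(1)[of 1 Pgt Pgt] glue_rel_glued(2)[of 2 Pgt Pgt] by (simp_all add: Pgt_def)
  then have "\<forall>x\<in>verts Pgt. (sh0 x, sh0 0) \<in> glue_rel Pgt Pgt"
    using glue_rel_trans by (auto simp: Pgt_def)
  then have "blg_iso (compose Pgt Pgt) ((map_blg (\<lambda>_. 0) Pgt)\<lparr>outp := map (\<lambda>_. 0) (outp Pgt)\<rparr>)"
    by (intro compose_edgeless_iso_map_blg[OF wf wf]) (auto simp: Pgt_def)
  moreover have "(map_blg (\<lambda>_. 0) Pgt)\<lparr>outp := map (\<lambda>_. 0) (outp Pgt)\<rparr> = spider 3 3"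
    by (simp add: map_blg_def Pgt_def spider_def edgeless_blg_def eval_nat_numeral)
  ultimately show ?thesis
    using iso_mem compose_mem[OF Pgt_mem Pgt_mem len] by metis
qed

lemma spider_2_0_mem: "spider 2 0 \<in> C"
  using involution_mem[OF M02_mem]
  by (simp add: M02_def involution_def spider_def edgeless_blg_def eval_nat_numeral)

lemma spider_1_3_mem: "spider 1 3 \<in> C"
proof -
  have "spider 0 6 \<in> C"
    using bend_inputs[OF spider_3_3_mem, of "[]" "[0, 0, 0]"]
    by (simp add: spider_def edgeless_blg_def eval_nat_numeral)
  then have "spider 0 4 \<in> C"
    using replace_output_segment[of "spider 0 6" "[0, 0]" "[]" "[0, 0, 0, 0]" "\<lambda>_. 0" "[]"]
      spider_2_0_mem
    by (simp add: spider_def edgeless_blg_def eval_nat_numeral)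
  from unbend_outputs[OF this, of "[0, 0, 0]" "[0]"] show ?thesis
    by (simp add: spider_def edgeless_blg_def eval_nat_numeral)
qed

lemma spider_3_1_mem: "spider 3 1 \<in> C"
  using involution_mem[OF spider_1_3_mem] by (simp add: spider_def involution_edgeless_blg)

lemma spider_2_2_mem: "spider 2 2 \<in> C"
  using unbend_outputs[OF spider_1_3_mem, of "[0, 0]" "[0]"]
  by (simp add: spider_def edgeless_blg_def eval_nat_numeral)

lemma move_pair_left:
  "L \<in> C \<Longrightarrow> outp L = xs @ [x, y, y] @ ys \<Longrightarrow> L\<lparr>outp := xs @ [y, y, x] @ ys\<rparr> \<in> C"
  using replace_output_segment[of L "[0, 1, 1]" "[1, 1, 0]" xs "\<lambda>i. if i = 0 then x else y" ys] Pgt_mem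
  by (simp add: Pgt_eq_edgeless_blg)

lemma move_pair_right:
  "L \<in> C \<Longrightarrow> outp L = xs @ [y, y, x] @ ys \<Longrightarrow> L\<lparr>outp := xs @ [x, y, y] @ ys\<rparr> \<in> C"
  using replace_output_segment[of L "[1, 1, 0]" "[0, 1, 1]" xs "\<lambda>i. if i = 0 then x else y" ys]
    involution_mem[OF Pgt_mem]
  by (simp add: Pgt_eq_edgeless_blg involution_edgeless_blg)

lemma triple_output:
  "L \<in> C \<Longrightarrow> outp L = xs @ [x] @ ys \<Longrightarrow> L\<lparr>outp := xs @ [x, x, x] @ ys\<rparr> \<in> C"
  using replace_output_segment[of L "[0]" "[0, 0, 0]" xs "\<lambda>_. x" ys] spider_1_3_mem
  by (simp add: spider_def eval_nat_numeral)

lemma untriple_output: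
  "L \<in> C \<Longrightarrow> outp L = xs @ [x, x, x] @ ys \<Longrightarrow> L\<lparr>outp := xs @ [x] @ ys\<rparr> \<in> C"
  using replace_output_segment[of L "[0, 0, 0]" "[0]" xs "\<lambda>_. x" ys] spider_3_1_mem
  by (simp add: spider_def eval_nat_numeral)

lemma cap_output_pair:
  "L \<in> C \<Longrightarrow> outp L = xs @ [x, x] @ ys \<Longrightarrow> L\<lparr>outp := xs @ ys\<rparr> \<in> C"
  using replace_output_segment[of L "[0, 0]" "[]" xs "\<lambda>_. x" ys] spider_2_0_mem
  by (simp add: spider_def eval_nat_numeral)

lemma merge_adjacent_outputs:
  assumes "L \<in> C" "outp L = xs @ [u, v] @ ys"
  shows "map_blg (\<lambda>z. if z = v then u else z) L \<in> C"
proof -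
  define m where "m z = (if z = v then u else z)" for z
  have "(map_blg m L)\<lparr>outp := map m xs @ map (\<lambda>_. u) [0::nat, 0] @ map m ys\<rparr> \<in> C"
  proof (rule replace_output_segment_map_blg[OF assms(1) _ _ assms(2)])
    show "edgeless_blg [0, 0] [0, 0] \<in> C"
      using spider_2_2_mem by (simp add: spider_def eval_nat_numeral)
    show "\<exists>i<length [0, 0]. \<exists>j<length [0, 0]. [0::nat, 0] ! i = [0, 0] ! j \<and> [u, v] ! i = x \<and> [u, v] ! j = m x"
      if "m x \<noteq> x" for x
      using that by (intro exI[of _ 1] conjI exI[of _ 0]) (simp_all add: m_def split: if_splits)
  qed (simp_all add: m_def)
  moreover have "map m xs @ map (\<lambda>_. u) [0::nat, 0] @ map m ys = map m (outp L)"
    using assms(2) by (simp add: m_def)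
  ultimately show ?thesis
    unfolding m_def[symmetric] by (simp add: map_blg_def)
qed

end

definition doubled :: "nat list \<Rightarrow> nat list" where
  "doubled ds = concat (map (\<lambda>d. [d, d]) ds)"

lemma doubled_simps [simp]:
  "doubled [] = []" "doubled (d # ds) = d # d # doubled ds" "doubled (xs @ ys) = doubled xs @ doubled ys"
  "map f (doubled ds) = doubled (map f ds)" "rev (doubled ds) = doubled (rev ds)"
  "set (doubled ds) = set ds" "length (doubled ds) = 2 * length ds"
  unfolding doubled_def by (induct ds) auto

lemma split_list_two_distinct:
  assumes "u \<in> set l" "v \<in> set l" "u \<noteq> v"
  obtains a b xs zs ys where "{a, b} = {u, v}" "l = xs @ [a] @ zs @ [b] @ ys"
proof -
  obtain l1 l2 where l: "l = l1 @ u # l2"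
    using assms(1) split_list by metis
  with assms(2,3) consider "v \<in> set l1" | "v \<in> set l2"
    by auto
  then show thesis
  proof cases
    case 1
    then obtain l3 l4 where "l1 = l3 @ v # l4"
      using split_list by metis
    with l that[of v u l3 l4 l2] show thesis by auto
  next
    case 2
    then obtain l3 l4 where "l2 = l3 @ v # l4"
      using split_list by metis
    with l that[of u v l1 l3 l4] show thesis by auto
  qed
qed

definition fully_labelled :: "blg \<Rightarrow> bool" where
  "fully_labelled K \<longleftrightarrow> verts K \<subseteq> set (inp K) \<union> set (outp K)"

context Pgt_graph_cat
begin

lemma move_pair_right_across:
  "L \<in> C \<Longrightarrow> outp L = xs @ [d, d] @ zs @ ys \<Longrightarrow> L\<lparr>outp := xs @ zs @ [d, d] @ ys\<rparr> \<in> C"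
proof (induct zs arbitrary: L xs)
  case (Cons z zs)
  have "L\<lparr>outp := (xs @ [z]) @ [d, d] @ zs @ ys\<rparr> \<in> C"
    using move_pair_right[OF Cons(2), of xs d z "zs @ ys"] Cons(3) by simp
  from Cons(1)[OF this] show ?case by simp
qed simp

lemma move_pair_left_across:
  "L \<in> C \<Longrightarrow> outp L = xs @ zs @ [d, d] @ ys \<Longrightarrow> L\<lparr>outp := xs @ [d, d] @ zs @ ys\<rparr> \<in> C"
proof (induct zs arbitrary: L xs)
  case (Cons z zs)
  have "L\<lparr>outp := (xs @ [z]) @ [d, d] @ zs @ ys\<rparr> \<in> C"
    using Cons(1)[OF Cons(2), of "xs @ [z]"] Cons(3) by simp
  from move_pair_left[OF this, of xs z d "zs @ ys"] show ?case by simp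
qed simp

lemma move_doubled_right_across:
  "L \<in> C \<Longrightarrow> outp L = xs @ doubled ds @ zs @ ys \<Longrightarrow> L\<lparr>outp := xs @ zs @ doubled ds @ ys\<rparr> \<in> C"
proof (induct ds arbitrary: L xs)
  case (Cons d ds)
  have "L\<lparr>outp := (xs @ [d, d]) @ zs @ doubled ds @ ys\<rparr> \<in> C"
    using Cons(1)[OF Cons(2), of "xs @ [d, d]"] Cons(3) by simp
  from move_pair_right_across[OF this, of xs d zs "doubled ds @ ys"] show ?case by simp
qed simp

lemma append_doubled_copy:
  "M \<in> C \<Longrightarrow> outp M = xs @ zs @ ys \<Longrightarrow> M\<lparr>outp := xs @ zs @ ys @ doubled zs\<rparr> \<in> C"
proof (induct zs arbitrary: M xs ys)
  case (Cons z zs)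
  have "M\<lparr>outp := xs @ [z, z, z] @ zs @ ys\<rparr> \<in> C"
    using triple_output[OF Cons(2), of xs z "zs @ ys"] Cons(3) by simp
  from move_pair_right_across[OF this, of "xs @ [z]" z "zs @ ys" "[]"]
  have "M\<lparr>outp := (xs @ [z]) @ zs @ (ys @ [z, z])\<rparr> \<in> C"
    by simp
  from Cons(1)[OF this, of "xs @ [z]" "ys @ [z, z]"] show ?case by simp
qed simp

lemma cap_doubled: "L \<in> C \<Longrightarrow> outp L = b @ doubled ds \<Longrightarrow> L\<lparr>outp := b\<rparr> \<in> C"
proof (induct ds arbitrary: L rule: rev_induct)
  case (snoc d ds)
  have "L\<lparr>outp := b @ doubled ds\<rparr> \<in> C"
    using cap_output_pair[OF snoc(2), of "b @ doubled ds" d "[]"] snoc(3) by simp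
  from snoc(1)[OF this] show ?case by simp
qed simp

text \<open>\<open>v\<close> is tripled and a pair of it travels left to \<open>u\<close>, where it is merged with \<open>u\<close>;
  the resulting pair of \<open>u\<close> travels back and is absorbed by untripling.\<close>

lemma merge_outputs:
  assumes L: "L \<in> C" and outp_L: "outp L = xs @ [u] @ zs @ [v] @ ys"
  shows "map_blg (\<lambda>z. if z = v then u else z) L \<in> C"
proof -
  define m where "m z = (if z = v then u else z)" for z
  have m: "m u = u" "m v = u"
    by (simp_all add: m_def)
  have "L\<lparr>outp := (xs @ [u] @ zs) @ [v, v, v] @ ys\<rparr> \<in> C"
    using triple_output[OF L, of "xs @ [u] @ zs" v ys] outp_L by simp
  from move_pair_left_across[OF this, of "xs @ [u]" zs v "[v] @ ys"]
  have "L\<lparr>outp := xs @ [u, v] @ (v # zs @ [v] @ ys)\<rparr> \<in> C"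
    by simp
  from merge_adjacent_outputs[OF this, of xs u v]
  have "(map_blg m L)\<lparr>outp := (map m xs @ [u]) @ [u, u] @ map m zs @ ([u] @ map m ys)\<rparr> \<in> C"
    by (simp add: map_blg_update_outp m m_def[symmetric])
  from move_pair_right_across[OF this, of "map m xs @ [u]" u "map m zs" "[u] @ map m ys"]
  have "(map_blg m L)\<lparr>outp := (map m xs @ [u] @ map m zs) @ [u, u, u] @ map m ys\<rparr> \<in> C"
    by simp
  from untriple_output[OF this, of "map m xs @ [u] @ map m zs" u "map m ys"]
  have "(map_blg m L)\<lparr>outp := map m (outp L)\<rparr> \<in> C"
    using outp_L m by simp
  then show ?thesis
    unfolding m_def[symmetric] by (simp add: map_blg_def)
qed

lemma map_blg_mem_if_outputs_cover:
  "L \<in> C \<Longrightarrow> verts L \<subseteq> set (outp L) \<Longrightarrow> map_blg f L \<in> C"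
proof (induct "card (verts L)" arbitrary: L rule: less_induct)
  case less
  show ?case
  proof (cases "inj_on f (verts L)")
    case True
    then show ?thesis using map_blg_mem less(2) by blast
  next
    case False
    then obtain u v where uv: "u \<in> verts L" "v \<in> verts L" "u \<noteq> v" "f u = f v"
      unfolding inj_on_def by blast
    have "u \<in> set (outp L)" "v \<in> set (outp L)"
      using uv(1,2) less(3) by auto
    then obtain a b xs zs ys where ab: "{a, b} = {u, v}" "outp L = xs @ [a] @ zs @ [b] @ ys"
      using uv(3) by (rule split_list_two_distinct)
    define m where "m z = (if z = b then a else z)" for z
    have "map_blg m L \<in> C"
      unfolding m_def using merge_outputs[OF less(2) ab(2)] .
    moreover have "card (verts (map_blg m L)) < card (verts L)"
    proof -
      have "verts (map_blg m L) \<subseteq> verts L - {b}" "b \<in> verts L"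
        using ab uv by (auto simp: map_blg_def m_def doubleton_eq_iff)
      moreover have "finite (verts L)"
        using wf_mem[OF less(2)] unfolding wf_blg_def by blast
      ultimately show ?thesis
        by (meson card_Diff1_less card_mono finite_Diff le_less_trans)
    qed
    moreover have "verts (map_blg m L) \<subseteq> set (outp (map_blg m L))"
      using less(3) by (auto simp: map_blg_def)
    ultimately have "map_blg f (map_blg m L) \<in> C"
      using less(1) by blast
    moreover have "f \<circ> m = f"
      using ab uv by (auto simp: m_def doubleton_eq_iff)
    ultimately show ?thesis
      by (simp add: map_blg_map_blg)
  qed
qed

lemma map_blg_mem_if_fully_labelled:
  assumes L: "L \<in> C" "fully_labelled L"
  shows "map_blg f L \<in> C"
proof -
  have "L\<lparr>inp := [], outp := outp L @ rev (inp L)\<rparr> \<in> C"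
    using bend_inputs[OF L(1), of "[]" "inp L"] by simp
  then have "map_blg f (L\<lparr>inp := [], outp := outp L @ rev (inp L)\<rparr>) \<in> C"
    by (rule map_blg_mem_if_outputs_cover) (use L(2) in \<open>auto simp: fully_labelled_def\<close>)
  then have "(map_blg f L)\<lparr>inp := [], outp := outp (map_blg f L) @ rev (inp (map_blg f L))\<rparr> \<in> C"
    by (simp add: map_blg_def rev_map)
  from unbend_outputs[OF this, of "outp (map_blg f L)" "inp (map_blg f L)"] show ?thesis
    by simp
qed

end

section \<open>Graphs covered by fully labelled graphs\<close>

definition add_output_pairs :: "blg \<Rightarrow> nat list \<Rightarrow> blg" where
  "add_output_pairs K ds = K\<lparr>outp := outp K @ doubled ds\<rparr>"

lemma glue_rel_add_output_pairs [simp]: "glue_rel (add_output_pairs H ds) K = glue_rel H K"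
  by (simp add: add_output_pairs_def glue_rel_def glue_pairs_def unglued_def)

lemma unglued_add_output_pairs [simp]:
  "verts (unglued (add_output_pairs H ds) K) = verts (unglued H K)"
  by (simp add: add_output_pairs_def unglued_def)

text \<open>Vertex \<open>j\<close> of the identity is glued to the extra output \<open>E ! j\<close> of \<open>K\<close>, so it retracts
  to that vertex.\<close>

lemma glue_rel_tensor_identity_blg_retract:
  fixes E :: "nat list"
  defines "\<pi> \<equiv> copair sh0 (copair sh1 (\<lambda>j. sh0 (E ! j)))"
  assumes len: "length (outp K) = length (inp H)"
    and glued: "(x, y) \<in> glue_rel (tensor H (identity_blg (length E))) (K\<lparr>outp := outp K @ E\<rparr>)"
  shows "(\<pi> x, \<pi> y) \<in> glue_rel H K"
proof -
  let ?T = "tensor H (identity_blg (length E))" and ?K = "K\<lparr>outp := outp K @ E\<rparr>"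
  have retract: "(\<pi> x, \<pi> y) \<in> glue_rel H K" if "(x, y) \<in> glue_pairs ?T ?K" for x y
  proof -
    from that obtain k where k: "k < length (outp ?K)" "k < length (inp ?T)"
      and xy: "x = map sh0 (outp ?K) ! k" "y = map sh1 (inp ?T) ! k"
      unfolding glue_pairs_def set_zip length_map min_less_iff_conj mem_Collect_eq prod.inject by blast
    show ?thesis
    proof (cases "k < length (outp K)")
      case True
      then show ?thesis
        using k xy len glue_rel_glued(1)[of k K H]
        by (simp add: \<pi>_def nth_append tensor_def identity_blg_def edgeless_blg_def)
    next
      case False
      then show ?thesis
        using k xy len by (simp add: \<pi>_def nth_append tensor_def identity_blg_def edgeless_blg_def)
    qed
  qed
  from glued show ?thesis
    unfolding glue_rel_def[of ?T ?K]
  proof (induct rule: rtrancl_induct)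
    case (step y w)
    from step(2) have "(\<pi> y, \<pi> w) \<in> glue_rel H K"
      using retract glue_rel_sym by auto
    with step(3) show ?case
      by (rule glue_rel_trans)
  qed simp
qed

lemma compose_tensor_identity_blg:
  fixes E :: "nat list"
  assumes wf: "wf_blg K" "wf_blg H" and len: "length (outp K) = length (inp H)"
    and E: "set E \<subseteq> verts K"
  defines "T \<equiv> tensor H (identity_blg (length E))" and "K' \<equiv> K\<lparr>outp := outp K @ E\<rparr>"
  defines "f \<equiv> qmap (glue_rel T K') \<circ> sh0" and "h \<equiv> qmap (glue_rel T K') \<circ> sh1 \<circ> sh0"
  shows "compose T K' = (glued_image f h K H)\<lparr>outp := map h (outp H) @ map f E\<rparr>"
    and "map f (outp K) = map h (inp H)"
    and "\<forall>z\<in>verts (unglued H K). \<forall>z'\<in>verts (unglued H K).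
      copair f h z = copair f h z' \<longrightarrow> (z, z') \<in> glue_rel H K"
proof -
  let ?q = "qmap (glue_rel T K')" and ?m = "length E"
  have inp_T: "inp T = map sh0 (inp H) @ map sh1 [0..<?m]"
    and outp_T: "outp T = map sh0 (outp H) @ map sh1 [0..<?m]"
    and verts_T: "verts T = sh0 ` verts H \<union> sh1 ` {0..<?m}"
    and edges_T: "edges T = (\<lambda>e. sh0 ` e) ` edges H"
    unfolding T_def tensor_def identity_blg_def edgeless_blg_def by simp_all
  have wf': "wf_blg K'" "wf_blg T"
    using wf E wf_tensor[OF wf(2) wf_edgeless_blg]
    unfolding K'_def T_def identity_blg_def by (auto simp: wf_blg_def)
  have len': "length (outp K') = length (inp T)"
    using len unfolding K'_def inp_T by simp
  have q_glued: "?q (sh0 (outp K' ! k)) = ?q (sh1 (inp T ! k))" if "k < length (outp K')" for k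
    using glue_rel_glued(1)[OF that len'] qmap_glue_rel_eq_iff[OF wf'] by blast
  have q_identity: "?q (sh1 (sh1 j)) = f (E ! j)" if "j < ?m" for j
    using q_glued[of "length (outp K) + j"] that len
    by (simp add: f_def K'_def inp_T nth_append)
  show "map f (outp K) = map h (inp H)"
  proof (rule nth_equalityI)
    fix i assume "i < length (map f (outp K))"
    then show "map f (outp K) ! i = map h (inp H) ! i"
      using q_glued[of i] len by (simp add: f_def h_def K'_def inp_T nth_append)
  qed (simp add: len)
  show "\<forall>z\<in>verts (unglued H K). \<forall>z'\<in>verts (unglued H K).
      copair f h z = copair f h z' \<longrightarrow> (z, z') \<in> glue_rel H K"
  proof (intro ballI impI)
    fix z z' assume "copair f h z = copair f h z'"
    define \<iota> where "\<iota> = copair sh0 (sh1 \<circ> sh0)"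
    have "copair f h w = ?q (\<iota> w)" for w
      by (cases w rule: sh_cases) (simp_all add: \<iota>_def f_def h_def)
    with \<open>copair f h z = copair f h z'\<close> have "(\<iota> z, \<iota> z') \<in> glue_rel T K'"
      using qmap_glue_rel_eq_iff[OF wf'] by simp
    from glue_rel_tensor_identity_blg_retract[OF len this[unfolded T_def K'_def]]
    show "(z, z') \<in> glue_rel H K"
      by (cases z rule: sh_cases; cases z' rule: sh_cases) (simp_all add: \<iota>_def)
  qed
  have map_identity: "map (\<lambda>j. ?q (sh1 (sh1 j))) [0..<?m] = map f E"
    using q_identity by (intro map_upt_eqI) simp_all
  show "compose T K' = (glued_image f h K H)\<lparr>outp := map h (outp H) @ map f E\<rparr>"
  proof (rule blg_eqI)
    have "?q ` sh1 ` sh1 ` {0..<?m} = set (map (\<lambda>j. ?q (sh1 (sh1 j))) [0..<?m])"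
      by (simp add: image_image)
    also have "\<dots> \<subseteq> f ` verts K"
      unfolding map_identity using E by auto
    finally have "?q ` sh1 ` sh1 ` {0..<?m} \<subseteq> f ` verts K" .
    then show "verts (compose T K') = verts ((glued_image f h K H)\<lparr>outp := map h (outp H) @ map f E\<rparr>)"
      unfolding compose_eq_map_blg_unglued unglued_def verts_T
      by (auto simp: K'_def map_blg_def glued_image_def f_def h_def image_Un image_image)
    have "outp (compose T K') = map h (outp H) @ map (\<lambda>j. ?q (sh1 (sh1 j))) [0..<?m]"
      by (simp add: compose_eq_map_blg_unglued unglued_def outp_T map_blg_def h_def comp_def)
    then show "outp (compose T K') = outp ((glued_image f h K H)\<lparr>outp := map h (outp H) @ map f E\<rparr>)"
      by (simp add: map_identity)
  qed (simp_all add: compose_eq_map_blg_unglued unglued_def edges_T K'_def map_blg_def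
      glued_image_def f_def h_def image_Un image_image)
qed

lemma fully_labelled_glued_image:
  assumes "fully_labelled (add_output_pairs K dK)" "fully_labelled (add_output_pairs H dH)"
    and compatible: "map f (outp K) = map h (inp H)"
  shows "fully_labelled (add_output_pairs (glued_image f h K H) (map h dH @ map f dK @ map f (outp K)))"
proof -
  have "verts K \<subseteq> set (inp K) \<union> set (outp K) \<union> set dK"
    and "verts H \<subseteq> set (inp H) \<union> set (outp H) \<union> set dH"
    using assms(1,2) unfolding fully_labelled_def add_output_pairs_def by auto
  then have "f ` verts K \<subseteq> f ` set (inp K) \<union> f ` set (outp K) \<union> f ` set dK"
    and "h ` verts H \<subseteq> h ` set (inp H) \<union> h ` set (outp H) \<union> h ` set dH"
    by (simp_all add: image_mono flip: image_Un)
  moreover have "h ` set (inp H) = f ` set (outp K)"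
    using arg_cong[OF compatible, of set] by simp
  ultimately show ?thesis
    unfolding fully_labelled_def add_output_pairs_def glued_image_def by auto
qed

lemma fully_labelled_map_blg: "fully_labelled K \<Longrightarrow> fully_labelled (map_blg f K)"
  unfolding fully_labelled_def map_blg_def by auto

lemma add_output_pairs_map_blg: "map_blg f (add_output_pairs K ds) = add_output_pairs (map_blg f K) (map f ds)"
  by (simp add: add_output_pairs_def map_blg_def)

context Pgt_graph_cat
begin

definition covered :: "blg set" where
  "covered = {K. wf_blg K \<and> (\<exists>ds. add_output_pairs K ds \<in> C \<and> fully_labelled (add_output_pairs K ds))}"

lemma coveredI: "wf_blg K \<Longrightarrow> add_output_pairs K ds \<in> C \<Longrightarrow> fully_labelled (add_output_pairs K ds) \<Longrightarrow> K \<in> covered"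
  unfolding covered_def by blast

lemma coveredE:
  assumes "K \<in> covered"
  obtains ds where "wf_blg K" "add_output_pairs K ds \<in> C" "fully_labelled (add_output_pairs K ds)"
  using assms unfolding covered_def by blast

lemma covered_if_fully_labelled: "K \<in> C \<Longrightarrow> fully_labelled K \<Longrightarrow> K \<in> covered"
  by (rule coveredI[of K "[]"]) (simp_all add: wf_mem add_output_pairs_def)

lemma covered_iso:
  assumes "K \<in> covered" "blg_iso K H"
  shows "H \<in> covered"
proof -
  obtain ds where K: "wf_blg K" "add_output_pairs K ds \<in> C" "fully_labelled (add_output_pairs K ds)"
    using assms(1) by (rule coveredE)
  obtain f where f: "inj_on f (verts K)" and H: "H = map_blg f K"
    using assms(2) by (rule blg_iso_imp_map_blg)
  have pairs: "add_output_pairs H (map f ds) = map_blg f (add_output_pairs K ds)"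
    by (simp add: H add_output_pairs_map_blg)
  show ?thesis
  proof (rule coveredI)
    show "wf_blg H"
      unfolding H using K(1) by (rule wf_map_blg)
    show "add_output_pairs H (map f ds) \<in> C"
      unfolding pairs using K(2) f by (intro map_blg_mem) (simp_all add: add_output_pairs_def)
    show "fully_labelled (add_output_pairs H (map f ds))"
      unfolding pairs using K(3) by (rule fully_labelled_map_blg)
  qed
qed

lemma covered_involution:
  assumes "K \<in> covered"
  shows "involution K \<in> covered"
proof -
  obtain ds where K: "wf_blg K" "add_output_pairs K ds \<in> C" "fully_labelled (add_output_pairs K ds)"
    using assms by (rule coveredE)
  have "(involution (add_output_pairs K ds))\<lparr>inp := outp K,
      outp := outp (involution (add_output_pairs K ds)) @ rev (doubled ds)\<rparr> \<in> C"
    by (rule bend_inputs[OF involution_mem[OF K(2)]]) (simp add: involution_def add_output_pairs_def)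
  then have "add_output_pairs (involution K) (rev ds) \<in> C"
    by (simp add: involution_def add_output_pairs_def)
  moreover have "fully_labelled (add_output_pairs (involution K) (rev ds))"
    using K(3) by (auto simp: fully_labelled_def involution_def add_output_pairs_def)
  ultimately show ?thesis
    using coveredI wf_involution K(1) by blast
qed

lemma covered_tensor:
  assumes "K \<in> covered" "H \<in> covered"
  shows "tensor K H \<in> covered"
proof -
  obtain dK where K: "wf_blg K" "add_output_pairs K dK \<in> C" "fully_labelled (add_output_pairs K dK)"
    using assms(1) by (rule coveredE)
  obtain dH where H: "wf_blg H" "add_output_pairs H dH \<in> C" "fully_labelled (add_output_pairs H dH)"
    using assms(2) by (rule coveredE)
  let ?L = "tensor (add_output_pairs K dK) (add_output_pairs H dH)"
  have "outp ?L = map sh0 (outp K) @ doubled (map sh0 dK) @ map sh1 (outp H) @ doubled (map sh1 dH)"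
    by (simp add: tensor_def add_output_pairs_def)
  from move_doubled_right_across[OF tensor_mem[OF K(2) H(2)] this]
  have "add_output_pairs (tensor K H) (map sh0 dK @ map sh1 dH) \<in> C"
    by (simp add: tensor_def add_output_pairs_def)
  moreover have "fully_labelled (add_output_pairs (tensor K H) (map sh0 dK @ map sh1 dH))"
    using K(3) H(3) by (auto simp: fully_labelled_def tensor_def add_output_pairs_def)
  ultimately show ?thesis
    using coveredI wf_tensor K(1) H(1) by blast
qed

text \<open>Before composing, every output of \<open>K\<close> is copied into an output pair, so that the glued
  vertices stay labelled; the copies pass through an identity next to \<open>H\<close>.\<close>

lemma covered_compose:
  assumes "K \<in> covered" "H \<in> covered" and len: "length (outp K) = length (inp H)"
  shows "compose H K \<in> covered"
proof -
  obtain dK where K: "wf_blg K" "add_output_pairs K dK \<in> C" "fully_labelled (add_output_pairs K dK)"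
    using assms(1) by (rule coveredE)
  obtain dH where H: "wf_blg H" "add_output_pairs H dH \<in> C" "fully_labelled (add_output_pairs H dH)"
    using assms(2) by (rule coveredE)
  define E where "E = doubled dK @ doubled (outp K)"
  define H' where "H' = add_output_pairs H dH"
  define T where "T = tensor H' (identity_blg (length E))"
  define K' where "K' = K\<lparr>outp := outp K @ E\<rparr>"
  define q where "q = qmap (glue_rel T K')"
  define f h where "f = q \<circ> sh0" and "h = q \<circ> sh1 \<circ> sh0"
  have "K' \<in> C"
    using append_doubled_copy[OF K(2), of "[]" "outp K" "doubled dK"]
    by (simp add: K'_def E_def add_output_pairs_def)
  moreover have "T \<in> C"
    unfolding T_def H'_def using H(2) identity_blg_mem by (rule tensor_mem)
  moreover have "length (outp K') = length (inp T)"
    using len by (simp add: K'_def T_def H'_def tensor_def identity_blg_def edgeless_blg_def add_output_pairs_def)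
  ultimately have "compose T K' \<in> C"
    by (rule compose_mem)
  have wf_H': "wf_blg H'"
    unfolding H'_def using H(2) by (rule wf_mem)
  have "set (outp (add_output_pairs K dK)) \<subseteq> verts (add_output_pairs K dK)"
    using wf_mem[OF K(2)] unfolding wf_blg_def by blast
  then have E_verts: "set E \<subseteq> verts K"
    using K(1) unfolding E_def add_output_pairs_def wf_blg_def by auto
  have len': "length (outp K) = length (inp H')"
    using len by (simp add: H'_def add_output_pairs_def)
  note composed = compose_tensor_identity_blg[OF K(1) wf_H' len' E_verts,
      folded T_def K'_def, folded q_def, folded f_def h_def]
  have compatible: "map f (outp K) = map h (inp H)"
    using composed(2) by (simp add: H'_def add_output_pairs_def)
  define G where "G = glued_image f h K H"
  have "blg_iso (compose H K) G"
    unfolding G_def using K(1) H(1) compatible composed(3)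
    by (intro compose_iso_glued_image) (simp_all add: H'_def)
  moreover have "G \<in> covered"
  proof (rule coveredI)
    show "wf_blg G"
      using \<open>blg_iso (compose H K) G\<close> wf_compose[OF K(1) H(1)] by (rule wf_blg_iso)
    have "compose T K' = add_output_pairs G (map h dH @ map f dK @ map f (outp K))"
      unfolding composed(1) by (simp add: G_def H'_def E_def add_output_pairs_def glued_image_def)
    with \<open>compose T K' \<in> C\<close> show "add_output_pairs G (map h dH @ map f dK @ map f (outp K)) \<in> C"
      by simp
    show "fully_labelled (add_output_pairs G (map h dH @ map f dK @ map f (outp K)))"
      unfolding G_def using K(3) H(3) compatible by (rule fully_labelled_glued_image)
  qed
  ultimately show ?thesis
    using covered_iso blg_iso_sym wf_compose[OF K(1) H(1)] by blast
qed

lemma graph_category_covered: "graph_category covered"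
  unfolding graph_category_def
proof (intro conjI ballI allI impI)
  show "M11 \<in> covered" "M02 \<in> covered" "blg0 \<in> covered"
    using M11_mem M02_mem blg0_mem
    by (auto intro!: covered_if_fully_labelled simp: fully_labelled_def M11_def M02_def blg0_def)
qed (auto elim: coveredE intro: covered_iso covered_tensor covered_compose covered_involution)

lemma map_blg_mem_if_covered:
  assumes "K \<in> covered"
  shows "map_blg g K \<in> C"
proof -
  obtain ds where K: "add_output_pairs K ds \<in> C" "fully_labelled (add_output_pairs K ds)"
    using assms by (rule coveredE)
  then have "map_blg g (add_output_pairs K ds) \<in> C"
    by (rule map_blg_mem_if_fully_labelled)
  then have "(map_blg g K)\<lparr>outp := outp (map_blg g K) @ doubled (map g ds)\<rparr> \<in> C"
    by (simp add: add_output_pairs_def map_blg_def)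
  from cap_doubled[OF this, of "outp (map_blg g K)" "map g ds"] show ?thesis
    by simp
qed

lemma gt_graph_category_if_subset_covered: "C \<subseteq> covered \<Longrightarrow> gt_graph_category C"
  unfolding gt_graph_category_def quotient_blg_eq_map_blg
  using graph_category map_blg_mem_if_covered by blast

end

section \<open>Generated categories\<close>

lemma graph_category_wf_blg: "graph_category {K. wf_blg K}"
  unfolding graph_category_def mem_Collect_eq Ball_def
  by (intro conjI allI impI) (simp_all add: wf_generators wf_blg_iso wf_tensor wf_compose wf_involution)

lemma graph_category_Inter:
  assumes "\<forall>C\<in>F. graph_category C" "F \<noteq> {}"
  shows "graph_category (\<Inter>F)"
proof -
  have cat: "graph_cat C" if "C \<in> F" for C
    using assms(1) that unfolding graph_cat_def by blast
  show ?thesis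
    unfolding graph_category_def
  proof (intro conjI ballI allI impI)
    fix K assume "K \<in> \<Inter>F"
    with assms(2) show "wf_blg K"
      using graph_cat.wf_mem[OF cat] by blast
  qed (use graph_cat.iso_mem[OF cat] graph_cat.M11_mem[OF cat] graph_cat.M02_mem[OF cat]
      graph_cat.blg0_mem[OF cat] graph_cat.tensor_mem[OF cat] graph_cat.compose_mem[OF cat]
      graph_cat.involution_mem[OF cat] in blast)+
qed

lemma graph_category_generated_cat:
  "\<forall>K\<in>S. wf_blg K \<Longrightarrow> graph_category (generated_cat S)"
  unfolding generated_cat_def using graph_category_wf_blg
  by (intro graph_category_Inter) auto

lemma subset_generated_cat: "S \<subseteq> generated_cat S"
  unfolding generated_cat_def by blast

lemma generated_cat_least: "graph_category C \<Longrightarrow> S \<subseteq> C \<Longrightarrow> generated_cat S \<subseteq> C"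
  unfolding generated_cat_def by blast

lemma generated_gt_cat_least: "gt_graph_category C \<Longrightarrow> S \<subseteq> C \<Longrightarrow> generated_gt_cat S \<subseteq> C"
  unfolding generated_gt_cat_def by blast

text \<open>\<open>Pgt\<close> is the quotient of \<open>M02 \<otimes> M11 \<otimes> involution M02\<close> identifying its first two vertices.\<close>

lemma Pgt_mem_if_gt_graph_category:
  assumes "gt_graph_category G"
  shows "Pgt \<in> G"
proof -
  interpret graph_cat G
    using assms unfolding gt_graph_category_def graph_cat_def by blast
  define X where "X = tensor (tensor M02 M11) (involution M02)"
  have "X \<in> G"
    unfolding X_def using M02_mem M11_mem by (intro tensor_mem involution_mem)
  have X: "X = \<lparr>verts = {0, 2, 1}, edges = {}, inp = [2, 1, 1], outp = [0, 0, 2]\<rparr>"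
    unfolding X_def tensor_def M02_def M11_def involution_def by (simp add: sh0_def sh1_def; blast)
  define r :: "nat rel" where "r = {(0, 0), (0, 1), (1, 0), (1, 1), (2, 2)}"
  have "equiv (verts X) r"
    unfolding X r_def equiv_def refl_on_def sym_def trans_def by auto
  with \<open>X \<in> G\<close> have "quotient_blg X r \<in> G"
    using assms unfolding gt_graph_category_def by blast
  have "r `` {0} = {0, 1}" "r `` {1} = {0, 1}" "r `` {2} = {2}"
    unfolding r_def by auto
  then have "qmap r 0 = 0" "qmap r 1 = 0" "qmap r 2 = 2"
    unfolding qmap_def by simp_all
  then have "quotient_blg X r = edgeless_blg [2, 0, 0] [0, 0, 2]"
    unfolding quotient_blg_def X edgeless_blg_def by (auto simp: insert_commute)
  with \<open>quotient_blg X r \<in> G\<close> have "map_blg (\<lambda>z. if z = 2 then 0 else 1) (edgeless_blg [2, 0, 0] [0, 0, 2]) \<in> G"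
    by (intro map_blg_mem) (auto simp: edgeless_blg_def)
  then show ?thesis
    by (simp add: map_blg_edgeless_blg Pgt_eq_edgeless_blg)
qed

lemma generated_cat_insert_Pgt_subset: "generated_cat (insert Pgt S) \<subseteq> generated_gt_cat S"
  unfolding generated_gt_cat_def
proof (rule Inter_greatest)
  fix G assume "G \<in> {C. gt_graph_category C \<and> S \<subseteq> C}"
  then have "gt_graph_category G" "S \<subseteq> G"
    by auto
  then show "generated_cat (insert Pgt S) \<subseteq> G"
    using Pgt_mem_if_gt_graph_category by (intro generated_cat_least) (auto simp: gt_graph_category_def)
qed

theorem proposition2p32:
  fixes S :: "blg set"
  assumes "\<forall>K\<in>S. wf_blg K"
    and "\<forall>K\<in>S. verts K \<subseteq> set (inp K) \<union> set (outp K)"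
  shows "gt_graph_category (generated_cat (insert Pgt S))
       \<and> generated_cat (insert Pgt S) = generated_gt_cat S"
proof -
  let ?C = "generated_cat (insert Pgt S)"
  have "graph_category ?C"
    using assms(1) by (intro graph_category_generated_cat) (simp add: wf_blg_def Pgt_def)
  then interpret Pgt_graph_cat ?C
    using subset_generated_cat[of "insert Pgt S"] by (unfold_locales; blast)
  have "\<forall>K\<in>insert Pgt S. fully_labelled K"
    using assms(2) by (simp add: fully_labelled_def Pgt_def)
  then have "insert Pgt S \<subseteq> covered"
    using subset_generated_cat[of "insert Pgt S"] covered_if_fully_labelled by blast
  then have gt: "gt_graph_category ?C"
    by (intro gt_graph_category_if_subset_covered generated_cat_least[OF graph_category_covered])
  moreover have "generated_gt_cat S \<subseteq> ?C"
    using subset_generated_cat[of "insert Pgt S"] by (intro generated_gt_cat_least[OF gt]) blast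
  ultimately show ?thesis
    using generated_cat_insert_Pgt_subset by blast
qed

end
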